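(* Let $N$ be a positive integer. Let $\pi: A\to B$ be a surjective map between nonempty finite sets and let $\mathfrak s$ be a section of $\pi$. Let $\mu$ and $\rho$ be two probability measures on $\{0,1,\dots,N\}^A$. Assume that $\mu$ is a $\pi$-lift and that the following two conditions hold: (A) Let $Z$ be a $\rho$-distributed random variable. For every $b\in B$, let $W_b:=(Z_c : c\in A,\ \pi(c)\neq b)$. For every $b\in B$, every $a\in\pi^{-1}(\{b\})$ and every event $H\in \sigma(W_b)$ of positive probability, the conditional distribution of $Z_{\mathfrak s(b)}$ given $H$ is stochastically dominated by the conditional distribution of $Z_a$ given $H$. (B) Let $Y$ be a $\mu$-distributed random variable, let $X_b:=\max_{a\in \pi^{-1}(\{b\})}Y_a$ for $b\in B$, and let $Y'_a:=X_{\pi(a)}\,\mathbf{1}_{\mathfrak s(\pi(a))=a}$ for $a\in A$. Then the distribution of $Y'$ is stochastically dominated by $\rho$. Then $\mu$ is stochastically dominated by $\rho$.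
   Context: $\{0,1,\dots,N\}^A$ carries the product order. A section of $\pi$ is a map $s:B\to A$ with $\pi\circ s=\mathrm{id}_B$. A probability measure $\mu$ on $\{0,\dots,N\}^A$ is a $\pi$-lift if for $\mu$-almost every $x$, for every $b\in B$, at most one $a\in\pi^{-1}(\{b\})$ satisfies $x_a\neq0$. Stochastic domination of $\mu$ by $\nu$ means there exist $X\sim\mu$, $Y\sim\nu$ on a common probability space with $X\le Y$ almost surely. *)

theory Defs
  imports "HOL-Probability.Probability"
begin

text \<open>Stochastic domination: existence of a monotone coupling (X ~ mu, Y ~ nu, X \<le> Y a.s.).
  All state spaces here are finite, so probability measures are pmfs.\<close>
definition stoch_dom :: "'x::order pmf \<Rightarrow> 'x pmf \<Rightarrow> bool" where
  "stoch_dom \<mu> \<nu> \<longleftrightarrow> (\<exists>w :: ('x \<times> 'x) pmf.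
      map_pmf fst w = \<mu> \<and> map_pmf snd w = \<nu> \<and> (\<forall>(x, y) \<in> set_pmf w. x \<le> y))"

definition is_section :: "('a \<Rightarrow> 'b) \<Rightarrow> ('b \<Rightarrow> 'a) \<Rightarrow> bool" where
  "is_section \<pi> s \<longleftrightarrow> (\<forall>b. \<pi> (s b) = b)"

definition pi_lift :: "('a \<Rightarrow> 'b) \<Rightarrow> ('a \<Rightarrow> nat) pmf \<Rightarrow> bool" where
  "pi_lift \<pi> \<mu> \<longleftrightarrow> (AE x in measure_pmf \<mu>. \<forall>b. \<forall>a1 a2. \<pi> a1 = b \<and> \<pi> a2 = b \<and>
      x a1 \<noteq> 0 \<and> x a2 \<noteq> 0 \<longrightarrow> a1 = a2)"

text \<open>W_b(z) = (z_c : pi c \<noteq> b), represented as the restriction of z to the complement of the fibre.\<close>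
definition W :: "('a \<Rightarrow> 'b) \<Rightarrow> 'b \<Rightarrow> ('a \<Rightarrow> nat) \<Rightarrow> ('a \<Rightarrow> nat)" where
  "W \<pi> b z = restrict z {c. \<pi> c \<noteq> b}"

text \<open>Events in sigma(W_b): preimages under W_b (discrete state space).\<close>
definition sigma_W :: "('a \<Rightarrow> 'b) \<Rightarrow> 'b \<Rightarrow> ('a \<Rightarrow> nat) set set" where
  "sigma_W \<pi> b = {W \<pi> b -` S | S. True}"

definition fibre_max :: "('a::finite \<Rightarrow> 'b) \<Rightarrow> ('a \<Rightarrow> nat) \<Rightarrow> 'b \<Rightarrow> nat" where
  "fibre_max \<pi> y b = Max {y a | a. \<pi> a = b}"

definition collapse :: "('a::finite \<Rightarrow> 'b) \<Rightarrow> ('b \<Rightarrow> 'a) \<Rightarrow> ('a \<Rightarrow> nat) \<Rightarrow> ('a \<Rightarrow> nat)" where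
  "collapse \<pi> s y = (\<lambda>a. if s (\<pi> a) = a then fibre_max \<pi> y (\<pi> a) else 0)"

end

theory Submission
  imports Defs
begin

(*
  Collapse the fibres of \<pi> onto the section one at a time. For a set D of fibres let \<mu>_D be
  the law of Y with every fibre over D collapsed onto its section point, so that \<mu>_B is the
  law in (B) and \<mu>_{} = \<mu>. By Strassen's theorem it suffices to prove \<mu>_D(U) \<le> \<rho>(U) for
  all up-sets U, and this inequality descends from D \<union> {b} to D. Let U' be the set of z for
  which moving z(s b) to some point of the fibre over b, and zeroing the rest of that fibre,
  lands in U. Then U' is an up-set, and because \<mu> is a \<pi>-lift, \<mu>_D(U) \<le> \<mu>_{D \<union> {b}}(U').
  Conditionally on the coordinates outside the fibre, U' asks z(s b) to lie in the largest of
  finitely many nested up-sets of naturals, so condition (A) gives \<rho>(U') \<le> \<rho>(U).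
  Strassen's theorem for finite supports is derived from a weighted Hall (supply-demand)
  theorem, proved by induction on the size of the instance.
*)

section \<open>A supply-demand theorem\<close>

definition neighbours :: "('x \<Rightarrow> 'y \<Rightarrow> bool) \<Rightarrow> 'y set \<Rightarrow> 'x set \<Rightarrow> 'y set" where
  "neighbours R Y A = {y \<in> Y. \<exists>x\<in>A. R x y}"

definition hall_condition ::
    "'x set \<Rightarrow> 'y set \<Rightarrow> ('x \<Rightarrow> 'y \<Rightarrow> bool) \<Rightarrow> ('x \<Rightarrow> real) \<Rightarrow> ('y \<Rightarrow> real) \<Rightarrow> bool" where
  "hall_condition X Y R p q \<longleftrightarrow> (\<forall>x\<in>X. 0 \<le> p x) \<and> (\<forall>y\<in>Y. 0 \<le> q y) \<and>
     (\<forall>A\<subseteq>X. sum p A \<le> sum q (neighbours R Y A))"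

definition transport_plan :: "'x set \<Rightarrow> 'y set \<Rightarrow> ('x \<Rightarrow> 'y \<Rightarrow> bool) \<Rightarrow>
    ('x \<Rightarrow> real) \<Rightarrow> ('y \<Rightarrow> real) \<Rightarrow> ('x \<Rightarrow> 'y \<Rightarrow> real) \<Rightarrow> bool" where
  "transport_plan X Y R p q f \<longleftrightarrow> (\<forall>x y. 0 \<le> f x y) \<and> (\<forall>x y. f x y \<noteq> 0 \<longrightarrow> x \<in> X \<and> y \<in> Y \<and> R x y) \<and>
     (\<forall>x\<in>X. (\<Sum>y\<in>Y. f x y) = p x) \<and> (\<forall>y\<in>Y. (\<Sum>x\<in>X. f x y) \<le> q y)"

lemma transport_plan_outside:
  "transport_plan X Y R p q f \<Longrightarrow> x \<notin> X \<or> y \<notin> Y \<Longrightarrow> f x y = 0"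
  unfolding transport_plan_def by blast

lemma transport_plan_row_sum:
  assumes "transport_plan X Y R p q f" "x \<in> X" "Y \<subseteq> Y'" "finite Y'"
  shows "(\<Sum>y\<in>Y'. f x y) = p x"
proof -
  have "(\<Sum>y\<in>Y'. f x y) = (\<Sum>y\<in>Y. f x y)"
    using assms transport_plan_outside[OF assms(1)]
    by (intro sum.mono_neutral_right) (auto intro: finite_subset)
  with assms show ?thesis unfolding transport_plan_def by auto
qed

lemma transport_plan_col_sum:
  assumes "transport_plan X Y R p q f" "X \<subseteq> X'" "finite X'"
  shows "(\<Sum>x\<in>X'. f x y) = (\<Sum>x\<in>X. f x y)"
  using assms transport_plan_outside[OF assms(1)]
  by (intro sum.mono_neutral_right) (auto intro: finite_subset)

lemma transport_plan_add_null_source: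
  assumes f: "transport_plan (X - {x0}) Y R p q f" and "p x0 = 0" "finite X"
  shows "transport_plan X Y R p q f"
proof -
  have "f x0 y = 0" for y
    using transport_plan_outside[OF f] by blast
  moreover have "(\<Sum>x\<in>X. f x y) = (\<Sum>x\<in>X - {x0}. f x y)" for y
    using transport_plan_col_sum[OF f] \<open>finite X\<close> by blast
  ultimately show ?thesis
    using f \<open>p x0 = 0\<close> unfolding transport_plan_def by auto
qed

lemma transport_plan_add_null_target:
  assumes f: "transport_plan X (Y - {y0}) R p q f" and "0 \<le> q y0" "finite Y"
  shows "transport_plan X Y R p q f"
proof -
  have "f x y0 = 0" for x
    using transport_plan_outside[OF f] by blast
  moreover have "(\<Sum>y\<in>Y. f x y) = p x" if "x \<in> X" for x
    using transport_plan_row_sum[OF f that] \<open>finite Y\<close> by blast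
  ultimately show ?thesis
    using f \<open>0 \<le> q y0\<close> unfolding transport_plan_def by auto
qed

lemma transport_plan_glue:
  assumes f1: "transport_plan A (neighbours R Y A) R p q f1"
    and f2: "transport_plan (X - A) (Y - neighbours R Y A) R p q f2"
    and "A \<subseteq> X" "finite X" "finite Y"
  shows "transport_plan X Y R p q (\<lambda>x y. if x \<in> A then f1 x y else f2 x y)"
    (is "transport_plan X Y R p q ?f")
proof -
  have NA: "neighbours R Y A \<subseteq> Y" unfolding neighbours_def by auto
  have rows: "(\<Sum>y\<in>Y. ?f x y) = p x" if "x \<in> X" for x
    using transport_plan_row_sum[OF f1 _ NA] transport_plan_row_sum[OF f2, of x Y] that \<open>finite Y\<close>
    by (cases "x \<in> A") auto
  have split: "(\<Sum>x\<in>X. ?f x y) = (\<Sum>x\<in>A. f1 x y) + (\<Sum>x\<in>X - A. f2 x y)" for y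
    using sum.subset_diff[OF \<open>A \<subseteq> X\<close> \<open>finite X\<close>, of "\<lambda>x. ?f x y"] by simp
  have cols: "(\<Sum>x\<in>X. ?f x y) \<le> q y" if "y \<in> Y" for y
  proof (cases "y \<in> neighbours R Y A")
    case True
    then have "(\<Sum>x\<in>X - A. f2 x y) = 0"
      using transport_plan_outside[OF f2] by simp
    then show ?thesis
      using split f1 True unfolding transport_plan_def by auto
  next
    case False
    then have "(\<Sum>x\<in>A. f1 x y) = 0"
      using transport_plan_outside[OF f1] by simp
    then show ?thesis
      using split f2 False that unfolding transport_plan_def by auto
  qed
  show ?thesis
    using f1 f2 rows cols \<open>A \<subseteq> X\<close> NA unfolding transport_plan_def by (auto split: if_splits)
qed

lemma transport_plan_add_edge:
  assumes "transport_plan X Y R (p(x0 := p x0 - e)) (q(y0 := q y0 - e)) f"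
    and "x0 \<in> X" "y0 \<in> Y" "R x0 y0" "0 \<le> e" "finite X" "finite Y"
  shows "transport_plan X Y R p q (\<lambda>x y. f x y + (if x = x0 \<and> y = y0 then e else 0))"
proof -
  have "(\<Sum>y\<in>Y. f x y + (if x = x0 \<and> y = y0 then e else 0)) =
      (\<Sum>y\<in>Y. f x y) + (if x = x0 then e else 0)" for x
    using \<open>y0 \<in> Y\<close> \<open>finite Y\<close> by (simp add: sum.distrib)
  moreover have "(\<Sum>x\<in>X. f x y + (if x = x0 \<and> y = y0 then e else 0)) =
      (\<Sum>x\<in>X. f x y) + (if y = y0 then e else 0)" for y
    using \<open>x0 \<in> X\<close> \<open>finite X\<close> by (simp add: sum.distrib)
  ultimately show ?thesis
    using assms unfolding transport_plan_def by (auto split: if_splits)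
qed

lemma hall_condition_subset:
  assumes "hall_condition X Y R p q" and "A \<subseteq> X" "neighbours R Y A \<subseteq> Y'" "Y' \<subseteq> Y"
  shows "hall_condition A Y' R p q"
proof -
  have "neighbours R Y' B = neighbours R Y B" if "B \<subseteq> A" for B
    using that assms(3,4) unfolding neighbours_def by blast
  with assms show ?thesis unfolding hall_condition_def by (metis subset_iff order_trans)
qed

lemma hall_condition_remove_null_target:
  assumes h: "hall_condition X Y R p q" and "q y0 = 0" "finite Y"
  shows "hall_condition X (Y - {y0}) R p q"
proof -
  have "sum q (neighbours R (Y - {y0}) A) = sum q (neighbours R Y A)" for A
  proof -
    have "neighbours R (Y - {y0}) A = neighbours R Y A - {y0}"
      unfolding neighbours_def by blast
    moreover have "finite (neighbours R Y A)"
      using \<open>finite Y\<close> unfolding neighbours_def by simp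
    ultimately show ?thesis
      using \<open>q y0 = 0\<close> by (simp add: sum_diff1)
  qed
  with h show ?thesis unfolding hall_condition_def by simp
qed

lemma hall_condition_contract_tight:
  assumes h: "hall_condition X Y R p q" and "finite X" "finite Y" "A \<subseteq> X"
    and tight: "sum p A = sum q (neighbours R Y A)"
  shows "hall_condition (X - A) (Y - neighbours R Y A) R p q"
proof -
  have "sum p B \<le> sum q (neighbours R (Y - neighbours R Y A) B)" if B: "B \<subseteq> X - A" for B
  proof -
    have fin: "finite A" "finite B" "finite (neighbours R Y A)"
        "finite (neighbours R (Y - neighbours R Y A) B)"
      using B \<open>A \<subseteq> X\<close> \<open>finite X\<close> \<open>finite Y\<close> unfolding neighbours_def
      by (auto intro: finite_subset[of _ X])
    have union: "neighbours R Y (A \<union> B) = neighbours R Y A \<union> neighbours R (Y - neighbours R Y A) B"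
      unfolding neighbours_def by blast
    have "sum q (neighbours R Y (A \<union> B)) =
        sum q (neighbours R Y A) + sum q (neighbours R (Y - neighbours R Y A) B)"
      unfolding union by (rule sum.union_disjoint[OF fin(3,4)]) (auto simp: neighbours_def)
    moreover have "sum p (A \<union> B) = sum p A + sum p B"
      using B by (intro sum.union_disjoint fin(1,2)) auto
    moreover have "sum p (A \<union> B) \<le> sum q (neighbours R Y (A \<union> B))"
      using h B \<open>A \<subseteq> X\<close> unfolding hall_condition_def by (meson Diff_subset le_sup_iff order_trans)
    ultimately show ?thesis
      using tight by linarith
  qed
  with h show ?thesis unfolding hall_condition_def by auto
qed

lemma sum_fun_upd_minus:
  fixes f :: "'a \<Rightarrow> 'b::ab_group_add"
  assumes "finite A"
  shows "sum (f(a := f a - e)) A = sum f A - (if a \<in> A then e else 0)"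
proof -
  have "f(a := f a - e) = (\<lambda>x. f x - (if x = a then e else 0))"
    by auto
  then show ?thesis
    using assms by (simp add: sum_subtractf)
qed

lemma hall_condition_reduce_edge:
  assumes h: "hall_condition X Y R p q" and "finite X" "finite Y"
    and "y0 \<in> Y" "R x0 y0" "e \<le> p x0" "e \<le> q y0"
    and slack: "\<And>A. A \<subseteq> X - {x0} \<Longrightarrow> y0 \<in> neighbours R Y A \<Longrightarrow> e \<le> sum q (neighbours R Y A) - sum p A"
  shows "hall_condition X Y R (p(x0 := p x0 - e)) (q(y0 := q y0 - e))"
proof -
  have "sum (p(x0 := p x0 - e)) A \<le> sum (q(y0 := q y0 - e)) (neighbours R Y A)" if A: "A \<subseteq> X" for A
  proof -
    have fin: "finite A" "finite (neighbours R Y A)"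
      using A \<open>finite X\<close> \<open>finite Y\<close> unfolding neighbours_def by (auto intro: finite_subset)
    have "y0 \<in> neighbours R Y A" if "x0 \<in> A"
      using that \<open>y0 \<in> Y\<close> \<open>R x0 y0\<close> unfolding neighbours_def by blast
    moreover have "sum p A \<le> sum q (neighbours R Y A)"
      using h A unfolding hall_condition_def by blast
    ultimately show ?thesis
      unfolding sum_fun_upd_minus[OF fin(1)] sum_fun_upd_minus[OF fin(2)]
      using slack[of A] A by (cases "x0 \<in> A") (auto simp: subset_Diff_insert)
  qed
  with h assms show ?thesis unfolding hall_condition_def by auto
qed

lemma hall_condition_saturate_edge:
  assumes h: "hall_condition X Y R p q" and "finite X" "finite Y" "x0 \<in> X" "y0 \<in> Y" "R x0 y0"
  obtains e where "0 \<le> e" "hall_condition X Y R (p(x0 := p x0 - e)) (q(y0 := q y0 - e))"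
    "e = p x0 \<or> e = q y0 \<or> (\<exists>A \<subseteq> X - {x0}. A \<noteq> {} \<and>
        sum (p(x0 := p x0 - e)) A = sum (q(y0 := q y0 - e)) (neighbours R Y A))"
proof -
  define slack where "slack A = sum q (neighbours R Y A) - sum p A" for A
  define S where "S = slack ` {A. A \<subseteq> X - {x0} \<and> y0 \<in> neighbours R Y A}"
  define M where "M = insert (p x0) (insert (q y0) S)"
  \<comment> \<open>the largest amount that can be sent along the edge without violating Hall's condition\<close>
  define e where "e = Min M"
  have "finite {A. A \<subseteq> X - {x0} \<and> y0 \<in> neighbours R Y A}"
    using \<open>finite X\<close> by (rule rev_finite_subset[OF finite_Pow_iff[THEN iffD2]]) auto
  then have "finite S"
    unfolding S_def by simp
  then have "finite M" "M \<noteq> {}"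
    unfolding M_def by simp_all
  then have e_le: "\<And>z. z \<in> M \<Longrightarrow> e \<le> z" and e_in: "e \<in> M"
    unfolding e_def by (simp_all add: Min_in)
  have e_le_slack: "e \<le> slack A" if "A \<subseteq> X - {x0}" "y0 \<in> neighbours R Y A" for A
    using that unfolding M_def S_def by (intro e_le[unfolded M_def S_def] insertI2 imageI) simp
  have "0 \<le> slack A" if "A \<subseteq> X - {x0}" for A
    using h that unfolding hall_condition_def slack_def by auto
  then have "0 \<le> z" if "z \<in> M" for z
    using that h \<open>x0 \<in> X\<close> \<open>y0 \<in> Y\<close> unfolding M_def S_def hall_condition_def by auto
  then have "0 \<le> e"
    using e_in by blast
  have "e \<le> p x0" "e \<le> q y0"
    by (simp_all add: e_le M_def)
  note reduced = hall_condition_reduce_edge[OF h \<open>finite X\<close> \<open>finite Y\<close> \<open>y0 \<in> Y\<close> \<open>R x0 y0\<close>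
      this e_le_slack[unfolded slack_def]]
  have tight: "\<exists>A \<subseteq> X - {x0}. A \<noteq> {} \<and>
      sum (p(x0 := p x0 - e)) A = sum (q(y0 := q y0 - e)) (neighbours R Y A)" if "e \<in> S"
  proof -
    obtain A where A: "A \<subseteq> X - {x0}" "y0 \<in> neighbours R Y A" "e = slack A"
      using \<open>e \<in> S\<close> unfolding S_def by blast
    have fin: "finite A" "finite (neighbours R Y A)"
      using A(1) \<open>finite X\<close> \<open>finite Y\<close> unfolding neighbours_def by (auto intro: finite_subset)
    have "A \<noteq> {}"
      using A(2) unfolding neighbours_def by blast
    moreover have "sum (p(x0 := p x0 - e)) A = sum (q(y0 := q y0 - e)) (neighbours R Y A)"
      unfolding sum_fun_upd_minus[OF fin(1)] sum_fun_upd_minus[OF fin(2)]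
      using A unfolding slack_def by auto
    ultimately show ?thesis
      using A(1) by blast
  qed
  show ?thesis
  proof (rule that[OF \<open>0 \<le> e\<close> reduced])
    show "e = p x0 \<or> e = q y0 \<or> (\<exists>A \<subseteq> X - {x0}. A \<noteq> {} \<and>
        sum (p(x0 := p x0 - e)) A = sum (q(y0 := q y0 - e)) (neighbours R Y A))"
      using e_in tight unfolding M_def by blast
  qed
qed

lemma transport_plan_if_degenerate:
  assumes finite: "finite X" "finite Y" and h: "hall_condition X Y R p q"
    and IH: "\<And>X' Y' p' q'. X' \<subseteq> X \<Longrightarrow> Y' \<subseteq> Y \<Longrightarrow> X' \<noteq> X \<or> Y' \<noteq> Y \<Longrightarrow>
      hall_condition X' Y' R p' q' \<Longrightarrow> \<exists>f. transport_plan X' Y' R p' q' f"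
    and degenerate: "(\<exists>x0\<in>X. p x0 = 0) \<or> (\<exists>y0\<in>Y. q y0 = 0) \<or>
      (\<exists>A \<subseteq> X. A \<noteq> {} \<and> A \<noteq> X \<and> sum p A = sum q (neighbours R Y A))"
  shows "\<exists>f. transport_plan X Y R p q f"
  using degenerate
proof (elim disjE bexE exE conjE)
  fix x0 assume "x0 \<in> X" "p x0 = 0"
  have "hall_condition (X - {x0}) Y R p q"
    using h by (rule hall_condition_subset) (auto simp: neighbours_def)
  moreover have "X - {x0} \<noteq> X"
    using \<open>x0 \<in> X\<close> by blast
  ultimately obtain f where f: "transport_plan (X - {x0}) Y R p q f"
    using IH[OF Diff_subset order_refl] by blast
  show ?thesis
    using transport_plan_add_null_source[OF f \<open>p x0 = 0\<close> finite(1)] by blast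
next
  fix y0 assume "y0 \<in> Y" "q y0 = 0"
  then have "hall_condition X (Y - {y0}) R p q"
    using hall_condition_remove_null_target[OF h] finite(2) by blast
  moreover have "Y - {y0} \<noteq> Y"
    using \<open>y0 \<in> Y\<close> by blast
  ultimately obtain f where f: "transport_plan X (Y - {y0}) R p q f"
    using IH[OF order_refl Diff_subset] by blast
  have "0 \<le> q y0"
    using \<open>q y0 = 0\<close> by simp
  then show ?thesis
    using transport_plan_add_null_target[OF f _ finite(2)] by blast
next
  fix A assume "A \<subseteq> X" "A \<noteq> {}" "A \<noteq> X" and tight: "sum p A = sum q (neighbours R Y A)"
  have "neighbours R Y A \<subseteq> Y"
    unfolding neighbours_def by blast
  moreover have "hall_condition A (neighbours R Y A) R p q"
    using h \<open>A \<subseteq> X\<close> by (rule hall_condition_subset) (auto simp: neighbours_def)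
  ultimately obtain f1 where f1: "transport_plan A (neighbours R Y A) R p q f1"
    using IH[OF \<open>A \<subseteq> X\<close>] \<open>A \<noteq> X\<close> by blast
  have "hall_condition (X - A) (Y - neighbours R Y A) R p q"
    using hall_condition_contract_tight[OF h finite \<open>A \<subseteq> X\<close> tight] .
  moreover have "X - A \<noteq> X"
    using \<open>A \<subseteq> X\<close> \<open>A \<noteq> {}\<close> by blast
  ultimately obtain f2 where f2: "transport_plan (X - A) (Y - neighbours R Y A) R p q f2"
    using IH[OF Diff_subset Diff_subset] by blast
  show ?thesis
    using transport_plan_glue[OF f1 f2 \<open>A \<subseteq> X\<close> finite] by blast
qed

lemma transport_plan_from_smaller:
  assumes finite: "finite X" "finite Y" and h: "hall_condition X Y R p q"
    and IH: "\<And>X' Y' p' q'. X' \<subseteq> X \<Longrightarrow> Y' \<subseteq> Y \<Longrightarrow> X' \<noteq> X \<or> Y' \<noteq> Y \<Longrightarrow>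
      hall_condition X' Y' R p' q' \<Longrightarrow> \<exists>f. transport_plan X' Y' R p' q' f"
  shows "\<exists>f. transport_plan X Y R p q f"
proof (cases "\<exists>x0\<in>X. neighbours R Y {x0} \<noteq> {}")
  case False
  \<comment> \<open>Hall's condition for singletons forces p = 0 on X, so the zero plan will do\<close>
  then have "p x = 0" if "x \<in> X" for x
    using h that unfolding hall_condition_def by (force dest: spec[of _ "{x}"])
  then have "transport_plan X Y R p q (\<lambda>_ _. 0)"
    using h unfolding transport_plan_def hall_condition_def by simp
  then show ?thesis
    by blast
next
  case True
  then obtain x0 y0 where "x0 \<in> X" "y0 \<in> Y" "R x0 y0"
    unfolding neighbours_def by blast
  then obtain e where "0 \<le> e" and h': "hall_condition X Y R (p(x0 := p x0 - e)) (q(y0 := q y0 - e))"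
    and saturated: "e = p x0 \<or> e = q y0 \<or> (\<exists>A \<subseteq> X - {x0}. A \<noteq> {} \<and>
      sum (p(x0 := p x0 - e)) A = sum (q(y0 := q y0 - e)) (neighbours R Y A))"
    using hall_condition_saturate_edge[OF h finite] by blast
  have "(\<exists>x\<in>X. (p(x0 := p x0 - e)) x = 0) \<or> (\<exists>y\<in>Y. (q(y0 := q y0 - e)) y = 0) \<or>
      (\<exists>A \<subseteq> X. A \<noteq> {} \<and> A \<noteq> X \<and>
        sum (p(x0 := p x0 - e)) A = sum (q(y0 := q y0 - e)) (neighbours R Y A))"
    using saturated
  proof (elim disjE exE conjE)
    fix A assume "A \<subseteq> X - {x0}" "A \<noteq> {}"
      and "sum (p(x0 := p x0 - e)) A = sum (q(y0 := q y0 - e)) (neighbours R Y A)"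
    moreover have "A \<subseteq> X" "A \<noteq> X"
      using \<open>A \<subseteq> X - {x0}\<close> \<open>x0 \<in> X\<close> by auto
    ultimately show ?thesis
      by blast
  qed (use \<open>x0 \<in> X\<close> \<open>y0 \<in> Y\<close> in auto)
  then obtain f where f: "transport_plan X Y R (p(x0 := p x0 - e)) (q(y0 := q y0 - e)) f"
    using transport_plan_if_degenerate[OF finite h' IH] by blast
  show ?thesis
    using transport_plan_add_edge[OF f \<open>x0 \<in> X\<close> \<open>y0 \<in> Y\<close> \<open>R x0 y0\<close> \<open>0 \<le> e\<close> finite] by blast
qed

theorem transport_plan_exists:
  assumes "finite X" "finite Y" "hall_condition X Y R p q"
  shows "\<exists>f. transport_plan X Y R p q f"
  using assms
proof (induction "card X + card Y" arbitrary: X Y p q rule: less_induct)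
  case less
  show ?case
  proof (rule transport_plan_from_smaller[OF less.prems])
    fix X' Y' p' q'
    assume sub: "X' \<subseteq> X" "Y' \<subseteq> Y" and proper: "X' \<noteq> X \<or> Y' \<noteq> Y"
      and h': "hall_condition X' Y' R p' q'"
    have "card X' \<le> card X" "card Y' \<le> card Y"
      using sub less.prems(1,2) by (simp_all add: card_mono)
    moreover have "card X' < card X \<or> card Y' < card Y"
      using sub proper less.prems(1,2) by (auto intro: psubset_card_mono)
    ultimately have "card X' + card Y' < card X + card Y"
      by linarith
    moreover have "finite X'" "finite Y'"
      using sub less.prems(1,2) by (simp_all add: finite_subset)
    ultimately show "\<exists>f. transport_plan X' Y' R p' q' f"
      using less.hyps h' by blast
  qed
qed

section \<open>Strassen's theorem for finitely supported distributions\<close>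

lemma measure_pmf_eq_sum_within:
  assumes "set_pmf p \<subseteq> S" "finite S"
  shows "measure p B = (\<Sum>z\<in>B \<inter> S. pmf p z)"
proof -
  have "measure p B = measure p (B \<inter> S)"
    using assms(1) by (metis measure_Int_set_pmf inf.absorb_iff2 inf_assoc)
  also have "\<dots> = (\<Sum>z\<in>B \<inter> S. pmf p z)"
    using assms(2) by (simp add: measure_measure_pmf_finite)
  finally show ?thesis .
qed

lemma transport_plan_total:
  assumes f: "transport_plan X Y R p q f"
  shows "(\<Sum>x\<in>X. \<Sum>y\<in>Y. f x y) = sum p X"
  using f unfolding transport_plan_def by simp

lemma transport_plan_col_sum_eq:
  assumes f: "transport_plan X Y R p q f" and "finite Y"
    and balanced: "sum p X = sum q Y" and "y \<in> Y"
  shows "(\<Sum>x\<in>X. f x y) = q y"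
proof (rule ccontr)
  \<comment> \<open>a column sum strictly below q y would make the total mass of the plan less than sum q Y\<close>
  assume "(\<Sum>x\<in>X. f x y) \<noteq> q y"
  then have "(\<Sum>y\<in>Y. \<Sum>x\<in>X. f x y) < sum q Y"
    using f \<open>y \<in> Y\<close> \<open>finite Y\<close> unfolding transport_plan_def
    by (intro sum_strict_mono_ex1) (auto simp: order_less_le)
  moreover have "(\<Sum>y\<in>Y. \<Sum>x\<in>X. f x y) = sum p X"
    using transport_plan_total[OF f] sum.swap[of f Y X] by simp
  ultimately show False
    using balanced by simp
qed

lemma pmf_embed_pmf_transport_plan:
  assumes f: "transport_plan X Y R p q f" and "finite X" "finite Y" and "sum p X = 1"
  shows "pmf (embed_pmf (case_prod f)) = case_prod f"
proof -
  have f_nonneg: "0 \<le> f x y" for x y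
    using f unfolding transport_plan_def by blast
  have "(\<integral>\<^sup>+z. ennreal (case_prod f z) \<partial>count_space UNIV) = (\<Sum>z\<in>X \<times> Y. ennreal (case_prod f z))"
    by (rule nn_integral_count_space') (use f assms(2,3) in \<open>auto simp: transport_plan_def\<close>)
  also have "\<dots> = ennreal (\<Sum>z\<in>X \<times> Y. case_prod f z)"
    by (intro sum_ennreal) (simp add: f_nonneg split_beta)
  also have "\<dots> = 1"
    using transport_plan_total[OF f] \<open>sum p X = 1\<close> by (simp add: sum.cartesian_product)
  finally show ?thesis
    by (intro ext pmf_embed_pmf) (auto simp: f_nonneg)
qed

lemma rel_pmf_of_transport_plan:
  assumes fin: "finite (set_pmf p)" "finite (set_pmf q)"
    and f: "transport_plan (set_pmf p) (set_pmf q) R (pmf p) (pmf q) f"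
  shows "rel_pmf R p q"
proof -
  define X Y where "X = set_pmf p" and "Y = set_pmf q"
  have fin_XY: "finite (X \<times> Y)"
    using fin by (simp add: X_def Y_def)
  have mass: "sum (pmf p) X = 1" "sum (pmf q) Y = 1"
    using fin by (simp_all add: X_def Y_def sum_pmf_eq_1)
  have row: "(\<Sum>y\<in>Y. f x y) = pmf p x" if "x \<in> X" for x
    using f that unfolding transport_plan_def X_def Y_def by blast
  have col: "(\<Sum>x\<in>X. f x y) = pmf q y" if "y \<in> Y" for y
    using transport_plan_col_sum_eq[OF f[folded X_def Y_def]] fin mass that
    unfolding X_def Y_def by simp
  define w where "w = embed_pmf (case_prod f)"
  have pmf_w: "pmf w = case_prod f"
    unfolding w_def using pmf_embed_pmf_transport_plan[OF f] fin mass by (simp add: X_def)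
  have supp_w: "set_pmf w \<subseteq> X \<times> Y"
    using transport_plan_outside[OF f] unfolding X_def Y_def by (auto simp: set_pmf_iff pmf_w)
  have "map_pmf fst w = p"
  proof (rule pmf_eqI)
    fix x
    have "fst -` {x} \<inter> (X \<times> Y) = (if x \<in> X then {x} \<times> Y else {})"
      by auto
    then show "pmf (map_pmf fst w) x = pmf p x"
      using row by (simp add: pmf_map measure_pmf_eq_sum_within[OF supp_w fin_XY] pmf_w
          sum.cartesian_product[symmetric] X_def set_pmf_iff)
  qed
  moreover have "map_pmf snd w = q"
  proof (rule pmf_eqI)
    fix y
    have "snd -` {y} \<inter> (X \<times> Y) = (if y \<in> Y then X \<times> {y} else {})"
      by auto
    then show "pmf (map_pmf snd w) y = pmf q y"
      using col by (simp add: pmf_map measure_pmf_eq_sum_within[OF supp_w fin_XY] pmf_w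
          sum.cartesian_product[symmetric] Y_def set_pmf_iff)
  qed
  moreover have "R x y" if "(x, y) \<in> set_pmf w" for x y
    using f that unfolding transport_plan_def by (auto simp: set_pmf_iff pmf_w)
  ultimately show ?thesis
    by (auto intro: rel_pmf.intros)
qed

lemma rel_pmf_measureI_finite:
  assumes fin: "finite (set_pmf p)" "finite (set_pmf q)"
    and le: "\<And>A. A \<subseteq> set_pmf p \<Longrightarrow> measure p A \<le> measure q {y. \<exists>x\<in>A. R x y}"
  shows "rel_pmf R p q"
proof -
  have "sum (pmf p) A \<le> sum (pmf q) (neighbours R (set_pmf q) A)" if A: "A \<subseteq> set_pmf p" for A
  proof -
    have "sum (pmf p) A = measure p A"
      using A fin by (simp add: measure_measure_pmf_finite finite_subset)
    also have "\<dots> \<le> measure q {y. \<exists>x\<in>A. R x y}"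
      by (rule le[OF A])
    also have "\<dots> = sum (pmf q) ({y. \<exists>x\<in>A. R x y} \<inter> set_pmf q)"
      by (rule measure_pmf_eq_sum_within[OF order_refl fin(2)])
    also have "{y. \<exists>x\<in>A. R x y} \<inter> set_pmf q = neighbours R (set_pmf q) A"
      unfolding neighbours_def by auto
    finally show ?thesis .
  qed
  then have "hall_condition (set_pmf p) (set_pmf q) R (pmf p) (pmf q)"
    unfolding hall_condition_def by simp
  then obtain f where "transport_plan (set_pmf p) (set_pmf q) R (pmf p) (pmf q) f"
    using transport_plan_exists fin by blast
  then show ?thesis
    using rel_pmf_of_transport_plan fin by blast
qed

lemma stoch_dom_iff_rel_pmf: "stoch_dom \<mu> \<nu> \<longleftrightarrow> rel_pmf (\<le>) \<mu> \<nu>"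
  unfolding stoch_dom_def rel_pmf.simps by fast

definition upset :: "'x::order set \<Rightarrow> bool" where
  "upset U \<longleftrightarrow> (\<forall>x\<in>U. \<forall>y. x \<le> y \<longrightarrow> y \<in> U)"

lemma stoch_dom_measure_upset_le:
  assumes "stoch_dom \<mu> \<nu>" "upset U"
  shows "measure \<mu> U \<le> measure \<nu> U"
proof -
  have "{y. \<exists>x\<in>U. x \<le> y} = U"
    using \<open>upset U\<close> unfolding upset_def by auto
  then show ?thesis
    using rel_pmf_measureD[of "(\<le>)" \<mu> \<nu> U] assms(1) by (simp add: stoch_dom_iff_rel_pmf)
qed

lemma stoch_dom_if_measure_upset_le:
  assumes "finite (set_pmf \<mu>)" "finite (set_pmf \<nu>)"
    and le: "\<And>U. upset U \<Longrightarrow> measure \<mu> U \<le> measure \<nu> U"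
  shows "stoch_dom \<mu> \<nu>"
  unfolding stoch_dom_iff_rel_pmf
proof (rule rel_pmf_measureI_finite[OF assms(1,2)])
  fix A :: "'a set"
  have "measure \<mu> A \<le> measure \<mu> {y. \<exists>x\<in>A. x \<le> y}"
    by (intro measure_pmf.finite_measure_mono) auto
  also have "\<dots> \<le> measure \<nu> {y. \<exists>x\<in>A. x \<le> y}"
    by (intro le) (auto simp: upset_def intro: order_trans)
  finally show "measure \<mu> A \<le> measure \<nu> {y. \<exists>x\<in>A. x \<le> y}" .
qed

lemma upsets_nested:
  fixes S T :: "'x::linorder set"
  assumes "upset S" "upset T"
  shows "S \<subseteq> T \<or> T \<subseteq> S"
proof (rule ccontr)
  assume "\<not> (S \<subseteq> T \<or> T \<subseteq> S)"
  then obtain x y where "x \<in> S" "x \<notin> T" "y \<in> T" "y \<notin> S"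
    by blast
  moreover have "x \<le> y \<or> y \<le> x"
    by (rule linear)
  ultimately show False
    using assms unfolding upset_def by blast
qed

lemma finite_upsets_greatest:
  fixes S :: "'i \<Rightarrow> 'x::linorder set"
  assumes "finite I" "I \<noteq> {}" "\<And>i. i \<in> I \<Longrightarrow> upset (S i)"
  obtains i where "i \<in> I" "\<And>j. j \<in> I \<Longrightarrow> S j \<subseteq> S i"
proof -
  obtain M where "M \<in> S ` I" and maximal: "\<forall>B\<in>S ` I. M \<subseteq> B \<longrightarrow> M = B"
    using finite_has_maximal[of "S ` I"] assms(1,2) by blast
  then obtain i where i: "i \<in> I" "M = S i"
    by blast
  show ?thesis
  proof (rule that[OF \<open>i \<in> I\<close>])
    fix j assume "j \<in> I"
    then show "S j \<subseteq> S i"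
      using upsets_nested[OF assms(3)[OF \<open>i \<in> I\<close>] assms(3)[OF \<open>j \<in> I\<close>]] maximal i by blast
  qed
qed

section \<open>Conditioning on a discrete variable\<close>

lemma measure_cond_pmf:
  fixes p :: "'a pmf"
  assumes "0 < measure p H"
  shows "measure (cond_pmf p H) B = measure p (H \<inter> B) / measure p H"
proof -
  have "set_pmf p \<inter> H \<noteq> {}"
    using assms measure_pmf_zero_iff[of p H] by auto
  moreover have "emeasure (measure_pmf p) H \<noteq> 0"
    using assms by (simp add: measure_pmf.emeasure_eq_measure)
  ultimately show ?thesis
    by (simp add: cond_pmf.rep_eq measure_pmf.emeasure_eq_measure)
qed

lemma measure_Int_vimage_le_if_cond_stoch_dom:
  fixes p :: "'a pmf"
  assumes dom: "0 < measure p H \<Longrightarrow> stoch_dom (map_pmf f (cond_pmf p H)) (map_pmf g (cond_pmf p H))"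
    and "upset T"
  shows "measure p (H \<inter> f -` T) \<le> measure p (H \<inter> g -` T)"
proof (cases "measure p H = 0")
  case True
  have "measure p (H \<inter> f -` T) \<le> measure p H"
    by (rule measure_pmf.finite_measure_mono) auto
  then show ?thesis
    using True by (simp add: order_trans)
next
  case False
  then have pos: "0 < measure p H"
    by (simp add: zero_less_measure_iff)
  have "measure (map_pmf f (cond_pmf p H)) T \<le> measure (map_pmf g (cond_pmf p H)) T"
    using stoch_dom_measure_upset_le[OF dom[OF pos] \<open>upset T\<close>] .
  then show ?thesis
    using pos by (simp add: measure_cond_pmf divide_le_cancel vimage_def)
qed

lemma measure_pmf_eq_sum_fibres:
  assumes "finite (set_pmf p)"
  shows "measure p A = (\<Sum>w \<in> g ` set_pmf p. measure p (A \<inter> g -` {w}))"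
proof -
  have "measure p A = (\<Sum>z\<in>A \<inter> set_pmf p. pmf p z)"
    using assms by (rule measure_pmf_eq_sum_within[OF order_refl])
  also have "\<dots> = (\<Sum>w \<in> g ` set_pmf p. \<Sum>z\<in>{z \<in> A \<inter> set_pmf p. g z = w}. pmf p z)"
    using assms by (intro sum.group[symmetric]) auto
  also have "\<dots> = (\<Sum>w \<in> g ` set_pmf p. measure p (A \<inter> g -` {w}))"
  proof (rule sum.cong)
    fix w
    have "{z \<in> A \<inter> set_pmf p. g z = w} = (A \<inter> g -` {w}) \<inter> set_pmf p"
      by auto
    then show "(\<Sum>z\<in>{z \<in> A \<inter> set_pmf p. g z = w}. pmf p z) = measure p (A \<inter> g -` {w})"
      using measure_pmf_eq_sum_within[OF order_refl assms] by simp
  qed simp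
  finally show ?thesis .
qed

lemma measure_pmf_le_by_fibres:
  assumes "finite (set_pmf p)" "\<And>w. measure p (A \<inter> g -` {w}) \<le> measure p (B \<inter> g -` {w})"
  shows "measure p A \<le> measure p B"
  using assms by (simp add: measure_pmf_eq_sum_fibres[of p _ g] sum_mono)

section \<open>Collapsing one fibre at a time\<close>

definition put_on_fibre :: "('a \<Rightarrow> 'b) \<Rightarrow> 'b \<Rightarrow> ('a \<Rightarrow> nat) \<Rightarrow> 'a \<Rightarrow> nat \<Rightarrow> ('a \<Rightarrow> nat)" where
  "put_on_fibre \<pi> b z a k = (\<lambda>c. if \<pi> c = b then (if c = a then k else 0) else z c)"

lemma put_on_fibre_mono:
  assumes "k \<le> k'" "\<And>c. \<pi> c \<noteq> b \<Longrightarrow> z c \<le> z' c"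
  shows "put_on_fibre \<pi> b z a k \<le> put_on_fibre \<pi> b z' a k'"
  using assms unfolding put_on_fibre_def le_fun_def by auto

lemma put_on_fibre_le:
  "put_on_fibre \<pi> (\<pi> a) z a (z a) \<le> z"
  unfolding put_on_fibre_def le_fun_def by auto

lemma put_on_fibre_W: "put_on_fibre \<pi> b (W \<pi> b z) = put_on_fibre \<pi> b z"
  unfolding put_on_fibre_def W_def by (intro ext) auto

definition fibre_lift :: "('a \<Rightarrow> 'b) \<Rightarrow> ('b \<Rightarrow> 'a) \<Rightarrow> 'b \<Rightarrow> ('a \<Rightarrow> nat) set \<Rightarrow> ('a \<Rightarrow> nat) set" where
  "fibre_lift \<pi> s b U = {z. \<exists>a. \<pi> a = b \<and> put_on_fibre \<pi> b z a (z (s b)) \<in> U}"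

lemma upset_fibre_lift:
  assumes "upset U"
  shows "upset (fibre_lift \<pi> s b U)"
  unfolding upset_def
proof (intro ballI allI impI)
  fix z z' assume "z \<in> fibre_lift \<pi> s b U" "z \<le> z'"
  then obtain a where "\<pi> a = b" "put_on_fibre \<pi> b z a (z (s b)) \<in> U"
    unfolding fibre_lift_def by blast
  moreover have "put_on_fibre \<pi> b z a (z (s b)) \<le> put_on_fibre \<pi> b z' a (z' (s b))"
    using \<open>z \<le> z'\<close> by (intro put_on_fibre_mono) (auto simp: le_fun_def)
  ultimately show "z' \<in> fibre_lift \<pi> s b U"
    using \<open>upset U\<close> unfolding upset_def fibre_lift_def by blast
qed

lemma fibre_lift_slice:
  fixes \<pi> :: "'a::finite \<Rightarrow> 'b"
  assumes sec: "is_section \<pi> s" and "upset U"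
  obtains a' T where "\<pi> a' = b" "upset T"
    "fibre_lift \<pi> s b U \<inter> W \<pi> b -` {w} = W \<pi> b -` {w} \<inter> (\<lambda>z. z (s b)) -` T"
    "W \<pi> b -` {w} \<inter> (\<lambda>z. z a') -` T \<subseteq> U"
proof -
  define H where "H = W \<pi> b -` {w}"
  define S where "S a = {k. put_on_fibre \<pi> b w a k \<in> U}" for a
  have S_upset: "upset (S a)" for a
    using \<open>upset U\<close> put_on_fibre_mono[of _ _ \<pi> b w w a] unfolding upset_def S_def by blast
  have "\<pi> (s b) = b"
    using sec unfolding is_section_def by blast
  then have "finite {a. \<pi> a = b}" "{a. \<pi> a = b} \<noteq> {}"
    by auto
  then obtain a' where "a' \<in> {a. \<pi> a = b}" and greatest: "\<And>a. a \<in> {a. \<pi> a = b} \<Longrightarrow> S a \<subseteq> S a'"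
    using finite_upsets_greatest[of "{a. \<pi> a = b}" S] S_upset by blast
  then have "\<pi> a' = b"
    by simp
  have put_H: "put_on_fibre \<pi> b z = put_on_fibre \<pi> b w" if "z \<in> H" for z
    using that put_on_fibre_W[of \<pi> b z] unfolding H_def by simp
  have "fibre_lift \<pi> s b U \<inter> H = H \<inter> (\<lambda>z. z (s b)) -` S a'"
  proof (intro set_eqI iffI)
    fix z assume "z \<in> fibre_lift \<pi> s b U \<inter> H"
    then obtain a where "\<pi> a = b" "z (s b) \<in> S a" "z \<in> H"
      using put_H unfolding fibre_lift_def S_def by auto
    then show "z \<in> H \<inter> (\<lambda>z. z (s b)) -` S a'"
      using greatest[of a] by auto
  next
    fix z assume "z \<in> H \<inter> (\<lambda>z. z (s b)) -` S a'"
    then show "z \<in> fibre_lift \<pi> s b U \<inter> H"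
      using put_H \<open>\<pi> a' = b\<close> unfolding fibre_lift_def S_def by auto
  qed
  moreover have "H \<inter> (\<lambda>z. z a') -` S a' \<subseteq> U"
  proof
    fix z assume z: "z \<in> H \<inter> (\<lambda>z. z a') -` S a'"
    then have "put_on_fibre \<pi> b z a' (z a') \<in> U"
      using put_H unfolding S_def by auto
    then show "z \<in> U"
      using put_on_fibre_le[of \<pi> a' z] \<open>upset U\<close> \<open>\<pi> a' = b\<close> unfolding upset_def by blast
  qed
  ultimately show ?thesis
    using that[OF \<open>\<pi> a' = b\<close> S_upset] unfolding H_def by blast
qed

lemma measure_fibre_lift_le:
  fixes \<rho> :: "('a::finite \<Rightarrow> nat) pmf"
  assumes sec: "is_section \<pi> s" and fin: "finite (set_pmf \<rho>)" and "upset U"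
    and condA: "\<And>a H. \<pi> a = b \<Longrightarrow> H \<in> sigma_W \<pi> b \<Longrightarrow> measure_pmf.prob \<rho> H > 0 \<Longrightarrow>
        stoch_dom (map_pmf (\<lambda>z. z (s b)) (cond_pmf \<rho> H)) (map_pmf (\<lambda>z. z a) (cond_pmf \<rho> H))"
  shows "measure \<rho> (fibre_lift \<pi> s b U) \<le> measure \<rho> U"
proof (rule measure_pmf_le_by_fibres[OF fin, of _ "W \<pi> b"])
  fix w
  obtain a' T where "\<pi> a' = b" "upset T"
    and slice: "fibre_lift \<pi> s b U \<inter> W \<pi> b -` {w} = W \<pi> b -` {w} \<inter> (\<lambda>z. z (s b)) -` T"
    and moved: "W \<pi> b -` {w} \<inter> (\<lambda>z. z a') -` T \<subseteq> U"
    using fibre_lift_slice[OF sec \<open>upset U\<close>] by blast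
  have "measure \<rho> (W \<pi> b -` {w} \<inter> (\<lambda>z. z (s b)) -` T) \<le> measure \<rho> (W \<pi> b -` {w} \<inter> (\<lambda>z. z a') -` T)"
    using condA[OF \<open>\<pi> a' = b\<close>] \<open>upset T\<close> unfolding sigma_W_def
    by (intro measure_Int_vimage_le_if_cond_stoch_dom) auto
  also have "\<dots> \<le> measure \<rho> (U \<inter> W \<pi> b -` {w})"
    using moved by (intro measure_pmf.finite_measure_mono) auto
  finally show "measure \<rho> (fibre_lift \<pi> s b U \<inter> W \<pi> b -` {w}) \<le> measure \<rho> (U \<inter> W \<pi> b -` {w})"
    unfolding slice .
qed

definition partial_collapse ::
    "('a::finite \<Rightarrow> 'b) \<Rightarrow> ('b \<Rightarrow> 'a) \<Rightarrow> 'b set \<Rightarrow> ('a \<Rightarrow> nat) \<Rightarrow> ('a \<Rightarrow> nat)" where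
  "partial_collapse \<pi> s D y = (\<lambda>a. if \<pi> a \<in> D then collapse \<pi> s y a else y a)"

lemma fibre_max_eq_single:
  assumes "\<pi> a0 = b" "\<And>c. \<pi> c = b \<Longrightarrow> c \<noteq> a0 \<Longrightarrow> y c = 0"
  shows "fibre_max \<pi> y b = y a0"
  unfolding fibre_max_def
proof (rule Max_eqI)
  show "finite {y a |a. \<pi> a = b}"
    by simp
  show "y a0 \<in> {y a |a. \<pi> a = b}"
    using assms(1) by blast
  show "k \<le> y a0" if "k \<in> {y a |a. \<pi> a = b}" for k
    using that assms(2) by fastforce
qed

lemma partial_collapse_in_fibre_lift:
  assumes sec: "is_section \<pi> s" and "b \<notin> D"
    and single: "\<And>a1 a2. \<pi> a1 = b \<Longrightarrow> \<pi> a2 = b \<Longrightarrow> y a1 \<noteq> 0 \<Longrightarrow> y a2 \<noteq> 0 \<Longrightarrow> a1 = a2"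
    and "partial_collapse \<pi> s D y \<in> U"
  shows "partial_collapse \<pi> s (insert b D) y \<in> fibre_lift \<pi> s b U"
proof -
  have sb: "\<pi> (s b) = b"
    using sec unfolding is_section_def by blast
  obtain a0 where "\<pi> a0 = b" and zero: "\<And>c. \<pi> c = b \<Longrightarrow> c \<noteq> a0 \<Longrightarrow> y c = 0"
  proof (cases "\<exists>a. \<pi> a = b \<and> y a \<noteq> 0")
    case True
    then show ?thesis
      using that single by blast
  next
    case False
    then show ?thesis
      using that sb by blast
  qed
  define z where "z = partial_collapse \<pi> s (insert b D) y"
  have "z (s b) = y a0"
    using sb fibre_max_eq_single[of \<pi> a0 b y, OF \<open>\<pi> a0 = b\<close> zero]
    unfolding z_def partial_collapse_def collapse_def by simp
  moreover have "put_on_fibre \<pi> b z a0 (y a0) = partial_collapse \<pi> s D y"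
    using zero \<open>\<pi> a0 = b\<close> \<open>b \<notin> D\<close>
    unfolding z_def put_on_fibre_def partial_collapse_def by (intro ext) auto
  ultimately show ?thesis
    using \<open>\<pi> a0 = b\<close> \<open>partial_collapse \<pi> s D y \<in> U\<close> unfolding z_def fibre_lift_def by auto
qed

lemma measure_partial_collapse_le:
  fixes \<mu> \<rho> :: "('a::finite \<Rightarrow> nat) pmf"
  assumes sec: "is_section \<pi> s" and lift: "pi_lift \<pi> \<mu>" and fin: "finite (set_pmf \<rho>)"
    and condA: "\<And>a H. \<pi> a = b \<Longrightarrow> H \<in> sigma_W \<pi> b \<Longrightarrow> measure_pmf.prob \<rho> H > 0 \<Longrightarrow>
        stoch_dom (map_pmf (\<lambda>z. z (s b)) (cond_pmf \<rho> H)) (map_pmf (\<lambda>z. z a) (cond_pmf \<rho> H))"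
    and "b \<notin> D"
    and IH: "\<And>U. upset U \<Longrightarrow> measure \<mu> (partial_collapse \<pi> s (insert b D) -` U) \<le> measure \<rho> U"
    and "upset U"
  shows "measure \<mu> (partial_collapse \<pi> s D -` U) \<le> measure \<rho> U"
proof -
  have "partial_collapse \<pi> s D -` U \<inter> set_pmf \<mu> \<subseteq>
      partial_collapse \<pi> s (insert b D) -` fibre_lift \<pi> s b U"
  proof
    fix y assume y: "y \<in> partial_collapse \<pi> s D -` U \<inter> set_pmf \<mu>"
    have "y \<in> set_pmf \<mu>"
      using y by simp
    then have "\<forall>b a1 a2. \<pi> a1 = b \<and> \<pi> a2 = b \<and> y a1 \<noteq> 0 \<and> y a2 \<noteq> 0 \<longrightarrow> a1 = a2"
      using lift unfolding pi_lift_def AE_measure_pmf_iff by (rule bspec[rotated])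
    then show "y \<in> partial_collapse \<pi> s (insert b D) -` fibre_lift \<pi> s b U"
      using partial_collapse_in_fibre_lift[OF sec \<open>b \<notin> D\<close>, of y U] y by blast
  qed
  then have "measure \<mu> (partial_collapse \<pi> s D -` U) \<le>
      measure \<mu> (partial_collapse \<pi> s (insert b D) -` fibre_lift \<pi> s b U)"
    unfolding measure_Int_set_pmf[symmetric, of \<mu> "partial_collapse \<pi> s D -` U"]
    by (rule measure_pmf.finite_measure_mono) simp
  also have "\<dots> \<le> measure \<rho> (fibre_lift \<pi> s b U)"
    by (rule IH[OF upset_fibre_lift[OF \<open>upset U\<close>]])
  also have "\<dots> \<le> measure \<rho> U"
    by (rule measure_fibre_lift_le[OF sec fin \<open>upset U\<close> condA])
  finally show ?thesis .
qed

theorem proposition2p13: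
  fixes N :: nat and \<pi> :: "'a::finite \<Rightarrow> 'b::finite" and s :: "'b \<Rightarrow> 'a"
    and \<mu> \<rho> :: "('a \<Rightarrow> nat) pmf"
  assumes "N > 0"
    and "surj \<pi>"
    and "is_section \<pi> s"
    and "set_pmf \<mu> \<subseteq> {x. \<forall>a. x a \<le> N}"
    and "set_pmf \<rho> \<subseteq> {x. \<forall>a. x a \<le> N}"
    and "pi_lift \<pi> \<mu>"
    and condA: "\<And>b a H. \<pi> a = b \<Longrightarrow> H \<in> sigma_W \<pi> b \<Longrightarrow> measure_pmf.prob \<rho> H > 0 \<Longrightarrow>
        stoch_dom (map_pmf (\<lambda>z. z (s b)) (cond_pmf \<rho> H)) (map_pmf (\<lambda>z. z a) (cond_pmf \<rho> H))"
    and condB: "stoch_dom (map_pmf (collapse \<pi> s) \<mu>) \<rho>"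
  shows "stoch_dom \<mu> \<rho>"
proof -
  have "finite {x :: 'a \<Rightarrow> nat. \<forall>a. x a \<le> N}"
    by (rule finite_subset[OF _ finite_PiE[of UNIV "\<lambda>_. {..N}"]]) (auto simp: PiE_iff)
  then have fin: "finite (set_pmf \<mu>)" "finite (set_pmf \<rho>)"
    using finite_subset[OF assms(4)] finite_subset[OF assms(5)] by simp_all
  define P where "P D \<longleftrightarrow> (\<forall>U. upset U \<longrightarrow> measure \<mu> (partial_collapse \<pi> s D -` U) \<le> measure \<rho> U)" for D
  have "partial_collapse \<pi> s UNIV = collapse \<pi> s"
    unfolding partial_collapse_def by simp
  then have "P UNIV"
    unfolding P_def using stoch_dom_measure_upset_le[OF condB] by simp
  have "P {}"
  proof (rule finite_empty_induct[where P = P, OF _ \<open>P UNIV\<close>])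
    show "finite (UNIV :: 'b set)"
      by simp
  next
    fix b D assume "b \<in> D" "P D"
    then show "P (D - {b})"
      using measure_partial_collapse_le[OF assms(3,6) fin(2) condA, of b "D - {b}"]
      unfolding P_def by (simp add: insert_absorb)
  qed
  moreover have "partial_collapse \<pi> s {} = id"
    unfolding partial_collapse_def by auto
  ultimately show ?thesis
    using stoch_dom_if_measure_upset_le[OF fin] unfolding P_def by simp
qed

end
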